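(* Let $\pi$ be a pyramid and $A$ a $\pi$-tableau with entries in an algebraically closed field $\Bbbk$ of characteristic zero. Then $\lambda_A-\tilde\rho$ is the weight of a one-dimensional $U(\mathfrak h)$-module (i.e. there is a one-dimensional $\mathfrak h$-module on which $\mathfrak t\subseteq\mathfrak h$ acts by $\lambda_A-\tilde\rho$) if and only if $A$ is column-connected.
   Context: Pyramid: integers $p_1\le\dots\le p_{m+n}$ with $\sum p_i=M+N$; rows $1,\dots,m+n$ top to bottom, row $i$ has $p_i$ consecutive boxes, each box not in the bottom row lies directly above a box of the row beneath; the bottom row has $\ell=p_{m+n}$ boxes; columns $1,\dots,\ell$. Rows are labelled "$+$" ($m$ rows, $M$ boxes in total) or "$-$" ($n$ rows, $N$ boxes); "$+$" boxes are numbered $1,\dots,M$ and "$-$" boxes $\bar1,\dots,\bar N$ down columns left to right; $I=\{1<\dots<M<\bar1<\dots<\bar N\}$; $\mathrm p(i)=0$ for $i\le M$, $1$ otherwise; $\mathrm{row}(i),\mathrm{col}(i)$ the row and column of box $i$. $\check q_c$ = number of "$+$" boxes minus number of "$-$" boxes in column $c$; $\check{\mathrm{row}}(i)$ = number of "$+$"-rows minus number of "$-$"-rows among rows $1,\dots,\mathrm{row}(i)$; $h=m-n$. $\mathfrak g=\mathfrak{gl}_{M|N}(\Bbbk)$ with elementary matrices $e_{i,j}$ of parity $\mathrm p(i)+\mathrm p(j)$, $\mathfrak t$ the diagonal matrices with dual basis $\varepsilon_i$, and $\mathfrak h=\mathrm{span}\{e_{i,j}:\mathrm{col}(i)=\mathrm{col}(j)\}$.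 $\tilde\rho=\sum_{i\in I}(-1)^{\mathrm p(i)}\big(h-\check{\mathrm{row}}(i)-(\check q_{\mathrm{col}(i)}+\dots+\check q_\ell)\big)\varepsilon_i$. A $\pi$-tableau $A$ fills the boxes with elements $a_i\in\Bbbk$ ($i\in I$), and $\lambda_A=\sum_{i\in I}a_i\varepsilon_i$. $A$ is column-connected if whenever box $j$ lies directly below box $i$: $a_i=a_j+1$ if $\mathrm p(i)=\mathrm p(j)$, and $a_i+a_j=-1$ if $\mathrm p(i)\ne\mathrm p(j)$. *)

theory Defs
  imports "HOL-Computational_Algebra.Polynomial"
begin

definition alg_closed :: "'k::field itself \<Rightarrow> bool" where
  "alg_closed _ \<longleftrightarrow> (\<forall>q :: 'k poly. 0 < degree q \<longrightarrow> (\<exists>x. poly q x = 0))"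

text \<open>A pyramid with rows 1..R (top to bottom). Row r has length len r and occupies
  columns off r + 1 .. off r + len r; sg r = True means the row is labelled "+".
  The bottom row R occupies columns 1 .. ell.\<close>
definition pyramid :: "nat \<Rightarrow> (nat \<Rightarrow> nat) \<Rightarrow> (nat \<Rightarrow> nat) \<Rightarrow> (nat \<Rightarrow> bool) \<Rightarrow> bool" where
  "pyramid R len off sg \<longleftrightarrow> 1 \<le> R \<and> off R = 0 \<and>
     (\<forall>r\<in>{1..R}. 1 \<le> len r) \<and>
     (\<forall>r\<in>{1..<R}. len r \<le> len (Suc r) \<and> off (Suc r) \<le> off r \<and>
                   off r + len r \<le> off (Suc r) + len (Suc r))"

definition boxes :: "nat \<Rightarrow> (nat \<Rightarrow> nat) \<Rightarrow> (nat \<Rightarrow> nat) \<Rightarrow> (nat \<times> nat) set" where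
  "boxes R len off = {(r, c). 1 \<le> r \<and> r \<le> R \<and> off r < c \<and> c \<le> off r + len r}"

definition sgn_row :: "(nat \<Rightarrow> bool) \<Rightarrow> nat \<Rightarrow> int" where
  "sgn_row sg r = (if sg r then 1 else -1)"

definition par :: "(nat \<Rightarrow> bool) \<Rightarrow> nat \<times> nat \<Rightarrow> nat" where
  "par sg b = (if sg (fst b) then 0 else 1)"

definition hh :: "nat \<Rightarrow> (nat \<Rightarrow> bool) \<Rightarrow> int" where
  "hh R sg = (\<Sum>r\<in>{1..R}. sgn_row sg r)"

definition rowc :: "(nat \<Rightarrow> bool) \<Rightarrow> nat \<Rightarrow> int" where
  "rowc sg r = (\<Sum>r'\<in>{1..r}. sgn_row sg r')"

definition qc :: "nat \<Rightarrow> (nat \<Rightarrow> nat) \<Rightarrow> (nat \<Rightarrow> nat) \<Rightarrow> (nat \<Rightarrow> bool) \<Rightarrow> nat \<Rightarrow> int" where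
  "qc R len off sg c = (\<Sum>b\<in>{b \<in> boxes R len off. snd b = c}. sgn_row sg (fst b))"

definition rho_tilde :: "nat \<Rightarrow> (nat \<Rightarrow> nat) \<Rightarrow> (nat \<Rightarrow> nat) \<Rightarrow> (nat \<Rightarrow> bool) \<Rightarrow> nat \<times> nat \<Rightarrow> int" where
  "rho_tilde R len off sg b =
     sgn_row sg (fst b) * (hh R sg - rowc sg (fst b) - (\<Sum>c\<in>{snd b..len R}. qc R len off sg c))"

definition column_connected ::
  "nat \<Rightarrow> (nat \<Rightarrow> nat) \<Rightarrow> (nat \<Rightarrow> nat) \<Rightarrow> (nat \<Rightarrow> bool) \<Rightarrow> (nat \<times> nat \<Rightarrow> 'k::field) \<Rightarrow> bool" where
  "column_connected R len off sg A \<longleftrightarrow>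
     (\<forall>r c. (r, c) \<in> boxes R len off \<longrightarrow> (Suc r, c) \<in> boxes R len off \<longrightarrow>
        (if sg r = sg (Suc r) then A (r, c) = A (Suc r, c) + 1
         else A (r, c) + A (Suc r, c) = -1))"

text \<open>Matrices in gl_{M|N}, with rows/columns indexed by the boxes (a relabelling of I).\<close>
type_synonym 'k mat = "nat \<times> nat \<Rightarrow> nat \<times> nat \<Rightarrow> 'k"

definition mat_mult :: "(nat \<times> nat) set \<Rightarrow> 'k::field mat \<Rightarrow> 'k mat \<Rightarrow> 'k mat" where
  "mat_mult B X Y = (\<lambda>i j. \<Sum>d\<in>B. X i d * Y d j)"

definition sbracket :: "(nat \<times> nat) set \<Rightarrow> 'k::field mat \<Rightarrow> nat \<Rightarrow> 'k mat \<Rightarrow> nat \<Rightarrow> 'k mat" where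
  "sbracket B X x Y y = (\<lambda>i j. mat_mult B X Y i j - (-1) ^ (x * y) * mat_mult B Y X i j)"

definition in_h :: "nat \<Rightarrow> (nat \<Rightarrow> nat) \<Rightarrow> (nat \<Rightarrow> nat) \<Rightarrow> 'k::field mat \<Rightarrow> bool" where
  "in_h R len off X \<longleftrightarrow> (\<forall>i j. X i j \<noteq> 0 \<longrightarrow>
      i \<in> boxes R len off \<and> j \<in> boxes R len off \<and> snd i = snd j)"

definition homog :: "(nat \<Rightarrow> bool) \<Rightarrow> 'k::field mat \<Rightarrow> nat \<Rightarrow> bool" where
  "homog sg X x \<longleftrightarrow> x \<in> {0, 1} \<and>
     (\<forall>i j. X i j \<noteq> 0 \<longrightarrow> (par sg i + par sg j) mod 2 = x)"

text \<open>A one-dimensional h-module: h acts on the one-dimensional super space by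
  the scalars chi X.  The action is linear, odd elements act by odd endomorphisms
  (necessarily zero on a one-dimensional space), and the action respects the
  supercommutator.\<close>
definition one_dim_module ::
  "nat \<Rightarrow> (nat \<Rightarrow> nat) \<Rightarrow> (nat \<Rightarrow> nat) \<Rightarrow> (nat \<Rightarrow> bool) \<Rightarrow> ('k::field mat \<Rightarrow> 'k) \<Rightarrow> bool" where
  "one_dim_module R len off sg chi \<longleftrightarrow>
     (\<forall>X Y. in_h R len off X \<longrightarrow> in_h R len off Y \<longrightarrow> chi (\<lambda>i j. X i j + Y i j) = chi X + chi Y) \<and>
     (\<forall>a X. in_h R len off X \<longrightarrow> chi (\<lambda>i j. a * X i j) = a * chi X) \<and>
     (\<forall>X. in_h R len off X \<longrightarrow> homog sg X 1 \<longrightarrow> chi X = 0) \<and>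
     (\<forall>X x Y y. in_h R len off X \<longrightarrow> in_h R len off Y \<longrightarrow> homog sg X x \<longrightarrow> homog sg Y y \<longrightarrow>
        chi (sbracket (boxes R len off) X x Y y) = chi X * chi Y - (-1) ^ (x * y) * chi Y * chi X)"

text \<open>t (diagonal matrices, contained in h) acts by the weight mu = sum_b mu b epsilon_b\<close>
definition has_weight ::
  "nat \<Rightarrow> (nat \<Rightarrow> nat) \<Rightarrow> (nat \<Rightarrow> nat) \<Rightarrow> ('k::field mat \<Rightarrow> 'k) \<Rightarrow> (nat \<times> nat \<Rightarrow> 'k) \<Rightarrow> bool" where
  "has_weight R len off chi mu \<longleftrightarrow>
     (\<forall>D. (\<forall>i j. D i j \<noteq> 0 \<longrightarrow> i = j \<and> i \<in> boxes R len off) \<longrightarrow>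
        chi D = (\<Sum>b\<in>boxes R len off. mu b * D b b))"

end

theory Submission
  imports Defs
begin

text \<open>Let \<open>s\<^sub>b = \<plusminus>1\<close> be the sign of the row of box \<open>b\<close>. For boxes \<open>i \<noteq> j\<close> of one column,
  \<open>[e\<^sub>i\<^sub>j, e\<^sub>j\<^sub>i] = e\<^sub>i\<^sub>i - s\<^sub>i s\<^sub>j e\<^sub>j\<^sub>j\<close>, and a one-dimensional module kills it (odd elements act by 0,
  even ones commute), so its weight \<open>\<mu>\<close> makes \<open>s\<^sub>b \<mu>\<^sub>b\<close> constant on columns. Conversely, under
  that condition \<open>X \<mapsto> \<Sum>\<^sub>b \<mu>\<^sub>b X\<^sub>b\<^sub>b\<close> kills every supercommutator of homogeneous elements of
  \<open>h\<close>, hence is a one-dimensional module. Columns of a pyramid are intervals of rows, so it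
  suffices to compare vertically adjacent boxes; there \<open>s \<rho>\<close> drops by exactly the sign of the
  lower box, which turns the comparison for \<open>\<mu> = \<lambda>\<^sub>A - \<rho>\<close> into column-connectedness.\<close>

definition elem_mat :: "nat \<times> nat \<Rightarrow> nat \<times> nat \<Rightarrow> 'k::field mat" where
  "elem_mat i j = (\<lambda>a b. if a = i \<and> b = j then 1 else 0)"

definition diag_char :: "(nat \<times> nat) set \<Rightarrow> (nat \<times> nat \<Rightarrow> 'k::field) \<Rightarrow> 'k mat \<Rightarrow> 'k" where
  "diag_char B mu X = (\<Sum>b\<in>B. mu b * X b b)"

definition signed_column_constant ::
  "(nat \<times> nat) set \<Rightarrow> (nat \<Rightarrow> bool) \<Rightarrow> (nat \<times> nat \<Rightarrow> 'k::field) \<Rightarrow> bool" where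
  "signed_column_constant B sg mu \<longleftrightarrow>
     (\<forall>b\<in>B. \<forall>d\<in>B. snd b = snd d \<longrightarrow>
        of_int (sgn_row sg (fst b)) * mu b = of_int (sgn_row sg (fst d)) * mu d)"

lemma finite_boxes: "finite (boxes R len off)"
proof -
  have "boxes R len off \<subseteq> (SIGMA r:{1..R}. {off r<..off r + len r})"
    by (auto simp: boxes_def)
  then show ?thesis by (rule finite_subset) auto
qed

lemma sgn_row_square: "sgn_row sg r * sgn_row sg r = 1"
  by (simp add: sgn_row_def)

lemma sgn_row_mult_eq_iff:
  "of_int (sgn_row sg r) * u = of_int (sgn_row sg r') * v
     \<longleftrightarrow> u = of_int (sgn_row sg r * sgn_row sg r') * (v :: 'k::field)"
  by (auto simp: sgn_row_def)

lemma minus_one_power_par: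
  "(-1 :: 'k::field) ^ ((par sg b + par sg d) mod 2) = of_int (sgn_row sg (fst b) * sgn_row sg (fst d))"
  by (simp add: par_def sgn_row_def)

lemma mat_mult_elem_mat:
  assumes "j \<in> B" "finite B"
  shows "mat_mult B (elem_mat i j) (elem_mat j k) = (elem_mat i k :: 'k::field mat)"
proof (intro ext)
  fix a b
  have "mat_mult B (elem_mat i j) (elem_mat j k) a b
      = (\<Sum>d\<in>B. if d = j then (if a = i \<and> b = k then 1 else 0) else (0::'k))"
    unfolding mat_mult_def elem_mat_def by (rule sum.cong) auto
  then show "mat_mult B (elem_mat i j) (elem_mat j k) a b = (elem_mat i k :: 'k mat) a b"
    using assms by (simp add: elem_mat_def)
qed

lemma sbracket_elem_mat:
  assumes "i \<in> B" "j \<in> B" "finite B"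
  shows "sbracket B (elem_mat i j) p (elem_mat j i) p
       = (\<lambda>a b. elem_mat i i a b - (-1) ^ p * (elem_mat j j a b :: 'k::field))"
  using assms by (simp add: sbracket_def mat_mult_elem_mat minus_one_power_iff)

lemma in_h_elem_mat:
  "i \<in> boxes R len off \<Longrightarrow> j \<in> boxes R len off \<Longrightarrow> snd i = snd j \<Longrightarrow> in_h R len off (elem_mat i j)"
  by (auto simp: in_h_def elem_mat_def)

lemma homog_elem_mat: "homog sg (elem_mat i j) ((par sg i + par sg j) mod 2)"
  by (auto simp: homog_def elem_mat_def)

lemma has_weight_diag_elem_mat:
  assumes "has_weight R len off chi mu" "i \<in> boxes R len off" "j \<in> boxes R len off" "i \<noteq> j"
  shows "chi (\<lambda>a b. elem_mat i i a b - t * elem_mat j j a b) = mu i - t * mu j"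
proof -
  have diag: "chi D = (\<Sum>b\<in>boxes R len off. mu b * D b b)"
    if "\<And>a b. D a b \<noteq> 0 \<Longrightarrow> a = b \<and> a \<in> boxes R len off" for D
    using assms(1) that unfolding has_weight_def by blast
  have "chi (\<lambda>a b. elem_mat i i a b - t * elem_mat j j a b)
      = (\<Sum>b\<in>boxes R len off. mu b * (elem_mat i i b b - t * elem_mat j j b b))"
    using assms(2,3) by (intro diag) (auto simp: elem_mat_def split: if_splits)
  also have "\<dots> = (\<Sum>b\<in>boxes R len off. (if b = i then mu i else 0) - (if b = j then t * mu j else 0))"
    using assms(4) by (intro sum.cong) (auto simp: elem_mat_def)
  also have "\<dots> = mu i - t * mu j"
    using assms(2,3) by (simp add: sum_subtractf finite_boxes)
  finally show ?thesis .
qed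

lemma one_dim_module_signed_weight_eq:
  assumes chi: "one_dim_module R len off sg chi" and w: "has_weight R len off chi mu"
    and i: "i \<in> boxes R len off" and j: "j \<in> boxes R len off" and col: "snd i = snd j"
  shows "of_int (sgn_row sg (fst i)) * mu i = of_int (sgn_row sg (fst j)) * mu j"
proof (cases "i = j")
  case False
  define p where "p = (par sg i + par sg j) mod 2"
  have h: "in_h R len off (elem_mat i j)" "in_h R len off (elem_mat j i)"
    using i j col by (simp_all add: in_h_elem_mat)
  have hom: "homog sg (elem_mat i j) p" "homog sg (elem_mat j i) p"
    using homog_elem_mat[of sg i j] homog_elem_mat[of sg j i] by (simp_all add: p_def add.commute)
  have "chi (elem_mat i j) * chi (elem_mat j i) - (-1) ^ (p * p) * chi (elem_mat j i) * chi (elem_mat i j) = 0"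
  proof (cases "p = 0")
    case False
    then have "homog sg (elem_mat i j) 1" using hom p_def by simp
    then have "chi (elem_mat i j) = 0" using chi h unfolding one_dim_module_def by blast
    then show ?thesis by simp
  qed simp
  then have "chi (sbracket (boxes R len off) (elem_mat i j) p (elem_mat j i) p) = 0"
    using chi h hom unfolding one_dim_module_def by metis
  then have "mu i - (-1) ^ p * mu j = 0"
    using has_weight_diag_elem_mat[OF w i j False]
    by (simp add: sbracket_elem_mat i j finite_boxes)
  then have "mu i = of_int (sgn_row sg (fst i) * sgn_row sg (fst j)) * mu j"
    by (simp add: p_def minus_one_power_par)
  then show ?thesis
    by (simp only: sgn_row_mult_eq_iff)
qed simp

lemma has_weight_diag_char: "has_weight R len off (diag_char (boxes R len off) mu) mu"
  by (simp add: has_weight_def diag_char_def)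

lemma diag_char_odd:
  assumes "homog sg X 1"
  shows "diag_char B mu X = 0"
proof -
  have "X b b = 0" for b
    using assms unfolding homog_def by (metis add_self_mod_2 zero_neq_one)
  then show ?thesis by (simp add: diag_char_def)
qed

lemma diag_char_sbracket:
  fixes mu :: "nat \<times> nat \<Rightarrow> 'k::field"
  assumes mu: "signed_column_constant (boxes R len off) sg mu"
    and X: "in_h R len off X" and Y: "in_h R len off Y"
    and hX: "homog sg X x" and hY: "homog sg Y y"
  shows "diag_char (boxes R len off) mu (sbracket (boxes R len off) X x Y y) = 0"
proof -
  define B where "B = boxes R len off"
  define s where "s = ((-1) ^ (x * y) :: 'k)"
  have "diag_char B mu (sbracket B X x Y y)
      = (\<Sum>b\<in>B. \<Sum>d\<in>B. mu b * X b d * Y d b) - s * (\<Sum>b\<in>B. \<Sum>d\<in>B. mu b * Y b d * X d b)"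
    unfolding diag_char_def sbracket_def mat_mult_def s_def
    by (simp add: right_diff_distrib sum_subtractf sum_distrib_left mult_ac)
  also have "(\<Sum>b\<in>B. \<Sum>d\<in>B. mu b * Y b d * X d b) = (\<Sum>b\<in>B. \<Sum>d\<in>B. mu d * X b d * Y d b)"
    by (subst sum.swap) (simp add: mult_ac)
  also have "(\<Sum>b\<in>B. \<Sum>d\<in>B. mu b * X b d * Y d b) - s * (\<Sum>b\<in>B. \<Sum>d\<in>B. mu d * X b d * Y d b)
      = (\<Sum>b\<in>B. \<Sum>d\<in>B. (mu b - s * mu d) * X b d * Y d b)"
    by (simp add: sum_distrib_left sum_subtractf[symmetric] algebra_simps)
  also have "\<dots> = 0"
  proof (intro sum.neutral ballI)
    fix b d assume b: "b \<in> B" and d: "d \<in> B"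
    show "(mu b - s * mu d) * X b d * Y d b = 0"
    proof (cases "X b d = 0 \<or> Y d b = 0")
      case False
      then have nz: "X b d \<noteq> 0" "Y d b \<noteq> 0" by simp_all
      have col: "snd b = snd d"
        using X nz(1) unfolding in_h_def by blast
      have x: "x = (par sg b + par sg d) mod 2"
        using hX nz(1) unfolding homog_def by metis
      moreover have "y = (par sg d + par sg b) mod 2"
        using hY nz(2) unfolding homog_def by metis
      ultimately have "x = y" by (simp add: add.commute)
      then have "s = (-1) ^ x"
        by (simp add: s_def minus_one_power_iff)
      also have "\<dots> = of_int (sgn_row sg (fst b) * sgn_row sg (fst d))"
        unfolding x by (rule minus_one_power_par)
      finally have "s = of_int (sgn_row sg (fst b) * sgn_row sg (fst d))" .
      moreover have "of_int (sgn_row sg (fst b)) * mu b = of_int (sgn_row sg (fst d)) * mu d"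
        using mu b d col unfolding signed_column_constant_def B_def by blast
      ultimately have "mu b = s * mu d"
        by (simp only: sgn_row_mult_eq_iff)
      then show ?thesis by simp
    qed auto
  qed
  finally show ?thesis unfolding B_def .
qed

lemma one_dim_module_diag_char:
  fixes mu :: "nat \<times> nat \<Rightarrow> 'k::field"
  assumes "signed_column_constant (boxes R len off) sg mu"
  shows "one_dim_module R len off sg (diag_char (boxes R len off) mu)"
  unfolding one_dim_module_def
proof (intro conjI allI impI)
  fix X Y :: "'k mat" and x y
  assume "in_h R len off X" "in_h R len off Y" "homog sg X x" "homog sg Y y"
  moreover from \<open>homog sg X x\<close> \<open>homog sg Y y\<close> have "x \<in> {0, 1}" "y \<in> {0, 1}"
    by (simp_all add: homog_def)
  ultimately show "diag_char (boxes R len off) mu (sbracket (boxes R len off) X x Y y)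
      = diag_char (boxes R len off) mu X * diag_char (boxes R len off) mu Y
        - (-1) ^ (x * y) * diag_char (boxes R len off) mu Y * diag_char (boxes R len off) mu X"
    using diag_char_sbracket[OF assms] diag_char_odd by auto
next
  fix X :: "'k mat"
  show "homog sg X 1 \<Longrightarrow> diag_char (boxes R len off) mu X = 0"
    by (rule diag_char_odd)
qed (simp_all add: diag_char_def distrib_left sum.distrib sum_distrib_left mult_ac)

theorem one_dim_module_with_weight_iff:
  "(\<exists>chi. one_dim_module R len off sg chi \<and> has_weight R len off chi mu)
     \<longleftrightarrow> signed_column_constant (boxes R len off) sg mu"
proof
  assume "\<exists>chi. one_dim_module R len off sg chi \<and> has_weight R len off chi mu"
  then obtain chi where "one_dim_module R len off sg chi" "has_weight R len off chi mu"
    by blast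
  then show "signed_column_constant (boxes R len off) sg mu"
    unfolding signed_column_constant_def by (blast intro: one_dim_module_signed_weight_eq)
next
  assume "signed_column_constant (boxes R len off) sg mu"
  then show "\<exists>chi. one_dim_module R len off sg chi \<and> has_weight R len off chi mu"
    by (intro exI[of _ "diag_char (boxes R len off) mu"] conjI one_dim_module_diag_char has_weight_diag_char)
qed

lemma pyramid_box_below:
  assumes p: "pyramid R len off sg" and b: "(r, c) \<in> boxes R len off" and k: "r \<le> k" "k \<le> R"
  shows "(k, c) \<in> boxes R len off"
  using k
proof (induction k rule: dec_induct)
  case (step n)
  then have "n \<in> {1..<R}" using b by (auto simp: boxes_def)
  then have "off (Suc n) \<le> off n \<and> off n + len n \<le> off (Suc n) + len (Suc n)"
    using p unfolding pyramid_def by blast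
  then show ?case using step by (auto simp: boxes_def)
qed (use b in simp)

lemma pyramid_column_constant:
  assumes p: "pyramid R len off sg"
    and f: "\<And>r c. (r, c) \<in> boxes R len off \<Longrightarrow> (Suc r, c) \<in> boxes R len off \<Longrightarrow> f (r, c) = f (Suc r, c)"
    and b: "b \<in> boxes R len off" and d: "d \<in> boxes R len off" and col: "snd b = snd d"
  shows "f b = f d"
proof -
  have down: "f (r, c) = f (r', c)"
    if rc: "(r, c) \<in> boxes R len off" and "r \<le> r'" and "(r', c) \<in> boxes R len off" for r r' c
    using that(2,3)
  proof (induction r' rule: dec_induct)
    case (step n)
    then have "(n, c) \<in> boxes R len off"
      using pyramid_box_below[OF p rc] by (auto simp: boxes_def)
    with step f show ?case by simp
  qed simp
  obtain r r' c where "b = (r, c)" "d = (r', c)"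
    using col by (metis prod.collapse)
  with b d show ?thesis
    by (metis down nle_le)
qed

lemma pyramid_signed_column_constant_iff:
  assumes p: "pyramid R len off sg"
  shows "signed_column_constant (boxes R len off) sg mu \<longleftrightarrow>
    (\<forall>r c. (r, c) \<in> boxes R len off \<longrightarrow> (Suc r, c) \<in> boxes R len off \<longrightarrow>
       of_int (sgn_row sg r) * mu (r, c) = of_int (sgn_row sg (Suc r)) * mu (Suc r, c))"
    (is "_ \<longleftrightarrow> ?neighbours")
proof
  assume "signed_column_constant (boxes R len off) sg mu"
  then show ?neighbours
    unfolding signed_column_constant_def by (metis fst_conv snd_conv)
next
  assume ?neighbours
  show "signed_column_constant (boxes R len off) sg mu"
    unfolding signed_column_constant_def
  proof (intro ballI impI)
    fix b d assume "b \<in> boxes R len off" "d \<in> boxes R len off" "snd b = snd d"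
    then show "of_int (sgn_row sg (fst b)) * mu b = of_int (sgn_row sg (fst d)) * mu d"
      by (rule pyramid_column_constant[OF p, where f = "\<lambda>b. of_int (sgn_row sg (fst b)) * mu b", rotated])
        (use \<open>?neighbours\<close> in simp)
  qed
qed

lemma sgn_row_rho_tilde_Suc:
  assumes "1 \<le> r"
  shows "sgn_row sg r * rho_tilde R len off sg (r, c)
       = sgn_row sg (Suc r) * rho_tilde R len off sg (Suc r, c) + sgn_row sg (Suc r)"
proof -
  have signed: "sgn_row sg r' * rho_tilde R len off sg (r', c)
      = hh R sg - rowc sg r' - (\<Sum>c'\<in>{c..len R}. qc R len off sg c')" for r'
    by (simp add: rho_tilde_def mult.assoc[symmetric] sgn_row_square)
  have "rowc sg (Suc r) = rowc sg r + sgn_row sg (Suc r)"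
    using assms by (simp add: rowc_def)
  then show ?thesis
    unfolding signed by linarith
qed

lemma signed_shifted_weights_eq_iff:
  fixes A :: "nat \<times> nat \<Rightarrow> 'k::field"
  assumes "1 \<le> r"
  shows "of_int (sgn_row sg r) * (A (r, c) - of_int (rho_tilde R len off sg (r, c)))
         = of_int (sgn_row sg (Suc r)) * (A (Suc r, c) - of_int (rho_tilde R len off sg (Suc r, c)))
     \<longleftrightarrow> (if sg r = sg (Suc r) then A (r, c) = A (Suc r, c) + 1 else A (r, c) + A (Suc r, c) = -1)"
proof -
  define s s' :: 'k where "s = of_int (sgn_row sg r)" and "s' = of_int (sgn_row sg (Suc r))"
  define p p' :: 'k where "p = of_int (rho_tilde R len off sg (r, c))"
    and "p' = of_int (rho_tilde R len off sg (Suc r, c))"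
  have "s * p = s' * p' + s'"
    unfolding s_def s'_def p_def p'_def
    using sgn_row_rho_tilde_Suc[OF assms, of sg R len off c] by (metis of_int_add of_int_mult)
  then have "s * (A (r, c) - p) = s' * (A (Suc r, c) - p') \<longleftrightarrow> s * A (r, c) = s' * (A (Suc r, c) + 1)"
    by (auto simp: algebra_simps)
  also have "\<dots> \<longleftrightarrow> A (r, c) = of_int (sgn_row sg r * sgn_row sg (Suc r)) * (A (Suc r, c) + 1)"
    unfolding s_def s'_def by (rule sgn_row_mult_eq_iff)
  also have "\<dots> \<longleftrightarrow> (if sg r = sg (Suc r) then A (r, c) = A (Suc r, c) + 1 else A (r, c) + A (Suc r, c) = -1)"
    by (simp add: sgn_row_def eq_diff_eq eq_neg_iff_add_eq_0 add_ac)
  finally show ?thesis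
    unfolding s_def s'_def p_def p'_def .
qed

theorem mainTheorem6:
  fixes R :: nat and len off :: "nat \<Rightarrow> nat" and sg :: "nat \<Rightarrow> bool"
    and A :: "nat \<times> nat \<Rightarrow> 'k::field_char_0"
  assumes "alg_closed TYPE('k)"
    and "pyramid R len off sg"
  shows "(\<exists>chi. one_dim_module R len off sg chi \<and>
            has_weight R len off chi (\<lambda>b. A b - of_int (rho_tilde R len off sg b)))
         \<longleftrightarrow> column_connected R len off sg A"
proof -
  have "(\<exists>chi. one_dim_module R len off sg chi \<and>
            has_weight R len off chi (\<lambda>b. A b - of_int (rho_tilde R len off sg b)))
      \<longleftrightarrow> signed_column_constant (boxes R len off) sg (\<lambda>b. A b - of_int (rho_tilde R len off sg b))"
    by (rule one_dim_module_with_weight_iff)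
  also have "\<dots> \<longleftrightarrow> (\<forall>r c. (r, c) \<in> boxes R len off \<longrightarrow> (Suc r, c) \<in> boxes R len off \<longrightarrow>
      of_int (sgn_row sg r) * (A (r, c) - of_int (rho_tilde R len off sg (r, c)))
      = of_int (sgn_row sg (Suc r)) * (A (Suc r, c) - of_int (rho_tilde R len off sg (Suc r, c))))"
    by (rule pyramid_signed_column_constant_iff[OF \<open>pyramid R len off sg\<close>])
  also have "\<dots> \<longleftrightarrow> column_connected R len off sg A"
    unfolding column_connected_def
    by (intro all_cong1 imp_cong[OF refl] signed_shifted_weights_eq_iff) (simp add: boxes_def)
  finally show ?thesis .
qed

end
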